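(* Let $a$ and $b$ be relatively prime integers with $1<a<b$ and $S=\langle a,b\rangle$. If $x\in I_{i,a}(S)$ for some $i\in\{1,\dots,a-1\}$, then either $x+a\in S$ or $x+a\in I_{i,a}(S)$.
   Context: $\langle a,b\rangle=\{\lambda_1a+\lambda_2b:\lambda_1,\lambda_2\in\mathbb{N}\}$. $I(S)$ is the set of isolated gaps of $S$ ($x\in\mathbb{N}\setminus S$ with $x-1,x+1\in S$), and $I_{i,a}(S)=\{s\in I(S):s\equiv i\pmod a\}$. *)

theory Defs
  imports Main
begin

definition semigroup2 :: "nat \<Rightarrow> nat \<Rightarrow> nat set" where
  "semigroup2 a b = {l1 * a + l2 * b | l1 l2. True}"

text \<open>Isolated gaps: x not in S, with x - 1 and x + 1 in S (x \<ge> 1 so that x - 1 is a natural number).\<close>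
definition isolated_gaps :: "nat set \<Rightarrow> nat set" where
  "isolated_gaps S = {x. x \<notin> S \<and> 1 \<le> x \<and> x - 1 \<in> S \<and> x + 1 \<in> S}"

definition isolated_gaps_mod :: "nat \<Rightarrow> nat \<Rightarrow> nat set \<Rightarrow> nat set" where
  "isolated_gaps_mod i a S = {s \<in> isolated_gaps S. s mod a = i mod a}"

end

theory Submission
  imports Defs
begin

text \<open>Since \<open>S\<close> is closed under adding \<open>a\<close>, the neighbours \<open>x - 1, x + 1 \<in> S\<close> of the gap \<open>x\<close>
  give the neighbours \<open>x + a - 1, x + a + 1 \<in> S\<close> of \<open>x + a\<close>, which lies in the same residue
  class mod \<open>a\<close>. So \<open>x + a\<close> is either in \<open>S\<close> or again an isolated gap.\<close>

lemma semigroup2_add_left: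
  assumes "s \<in> semigroup2 a b"
  shows "s + a \<in> semigroup2 a b"
proof -
  from assms obtain l1 l2 where "s = l1 * a + l2 * b"
    unfolding semigroup2_def by blast
  then have "s + a = Suc l1 * a + l2 * b" by simp
  then show ?thesis unfolding semigroup2_def by blast
qed

lemma isolated_gaps_add_closed:
  assumes closed: "\<And>s. s \<in> S \<Longrightarrow> s + a \<in> S"
    and gap: "x \<in> isolated_gaps S"
    and "x + a \<notin> S"
  shows "x + a \<in> isolated_gaps S"
proof -
  from gap have "1 \<le> x" and "x - 1 \<in> S" and "x + 1 \<in> S"
    unfolding isolated_gaps_def by auto
  then have "x - 1 + a \<in> S" and "x + 1 + a \<in> S"
    using closed by blast+
  with \<open>1 \<le> x\<close> have "x + a - 1 \<in> S" and "x + a + 1 \<in> S"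
    by (simp_all add: ac_simps)
  with \<open>x + a \<notin> S\<close> \<open>1 \<le> x\<close> show ?thesis
    unfolding isolated_gaps_def by simp
qed

lemma isolated_gaps_mod_add_closed:
  assumes "\<And>s. s \<in> S \<Longrightarrow> s + a \<in> S"
    and "x \<in> isolated_gaps_mod i a S"
  shows "x + a \<in> S \<or> x + a \<in> isolated_gaps_mod i a S"
  using assms isolated_gaps_add_closed[of S a x]
  unfolding isolated_gaps_mod_def by auto

theorem lemma4p4:
  fixes a b i x :: nat
  assumes "coprime a b" and "1 < a" and "a < b"
    and "i \<in> {1..a-1}"
    and "x \<in> isolated_gaps_mod i a (semigroup2 a b)"
  shows "x + a \<in> semigroup2 a b \<or> x + a \<in> isolated_gaps_mod i a (semigroup2 a b)"
  using isolated_gaps_mod_add_closed[OF semigroup2_add_left assms(5)] .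

end
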